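(* The following strict inclusions hold: (1) $\mathrm{SQC}^n\subsetneq \mathrm{CN}^n\subsetneq \mathrm{QC}^n$; (2) $\mathrm{QCP}^n\subsetneq \mathrm{CN}^n$; (3) $\mathrm{CONV}^n\subsetneq \mathrm{CN}^n$.
   Context: All functions considered are $f:\mathrm{dom}(f)\to\mathbb{R}$ with $\mathrm{dom}(f)\subseteq\mathbb{R}^n$ convex. $f$ is quasiconvex if $f(z)\le\max\{f(x),f(y)\}$ for all $x,y\in\mathrm{dom}(f)$, $z\in(x,y)$; strictly quasiconvex if $f(z)<\max\{f(x),f(y)\}$ for all such $x,y,z$ (with $x\ne y$). $\mathrm{QC}^n$, $\mathrm{SQC}^n$, $\mathrm{CONV}^n$ denote the classes of quasiconvex, strictly quasiconvex, and convex functions respectively. $\mathrm{QCP}^n$ is the class of quasiconvex polynomials $\mathbb{R}^n\to\mathbb{R}$ with real coefficients and nonzero degree. A function $f$ is conic if for all $y,z\in\mathrm{dom}(f)$ and all $t\ge 0$ with $f(y)\le f(z)$ and $z+t(z-y)\in\mathrm{dom}(f)$, we have $f(z+t(z-y))\ge f(z)$; $\mathrm{CN}^n$ denotes the class of conic functions. *)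

theory Defs
  imports "HOL-Analysis.Analysis"
begin

text \<open>A function f : dom(f) \<rightarrow> R with dom(f) \<subseteq> R^n convex is represented as a pair (D, f)
  with D :: (real^'n) set convex; the values of f outside D are irrelevant.\<close>

type_synonym 'n rfun = "(real^'n) set \<times> (real^'n \<Rightarrow> real)"

definition QC :: "'n::finite rfun set" where
  "QC = {(D, f). convex D \<and>
     (\<forall>x\<in>D. \<forall>y\<in>D. \<forall>z\<in>open_segment x y. f z \<le> max (f x) (f y))}"

definition SQC :: "'n::finite rfun set" where
  "SQC = {(D, f). convex D \<and>
     (\<forall>x\<in>D. \<forall>y\<in>D. x \<noteq> y \<longrightarrow> (\<forall>z\<in>open_segment x y. f z < max (f x) (f y)))}"

definition CONV :: "'n::finite rfun set" where
  "CONV = {(D, f). convex D \<and> convex_on D f}"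

definition CN :: "'n::finite rfun set" where
  "CN = {(D, f). convex D \<and>
     (\<forall>y\<in>D. \<forall>z\<in>D. \<forall>t::real. t \<ge> 0 \<and> f y \<le> f z \<and> z + t *\<^sub>R (z - y) \<in> D
         \<longrightarrow> f (z + t *\<^sub>R (z - y)) \<ge> f z)}"

inductive_set poly_fun :: "(real^'n::finite \<Rightarrow> real) set" where
  const: "(\<lambda>x. c) \<in> poly_fun"
| coord: "(\<lambda>x. x $ i) \<in> poly_fun"
| add: "p \<in> poly_fun \<Longrightarrow> q \<in> poly_fun \<Longrightarrow> (\<lambda>x. p x + q x) \<in> poly_fun"
| mult: "p \<in> poly_fun \<Longrightarrow> q \<in> poly_fun \<Longrightarrow> (\<lambda>x. p x * q x) \<in> poly_fun"

text \<open>Quasiconvex polynomials of nonzero degree (over R, a polynomial has degree 0 or is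
  the zero polynomial iff its polynomial function is constant).\<close>

definition QCP :: "'n::finite rfun set" where
  "QCP = {(D, p). D = UNIV \<and> p \<in> poly_fun \<and> \<not> (\<exists>c. \<forall>x. p x = c) \<and> (D, p) \<in> QC}"

end

theory Submission
  imports Defs "HOL-Computational_Algebra.Polynomial"
begin

text \<open>
  A function is conic exactly when, along every segment, it cannot rise weakly from an
  endpoint to an interior point and then drop below that value at the other endpoint.
  In this form the inclusions are immediate: strict quasiconvexity or convexity forbids the
  drop, and a drop at both endpoints would violate conicity. A quasiconvex polynomial that
  rose and then dropped along a segment would, by quasiconvexity, be constant on a whole
  subinterval, hence constant on the line, which contradicts the drop. The strictness is
  witnessed by a constant function (conic, but neither strictly quasiconvex nor a polynomial
  of nonzero degree), the step function of a coordinate (quasiconvex, not conic) and the cube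
  of a coordinate (conic, not convex).
\<close>

lemma open_segment_on_line:
  fixes y d :: "'a::real_vector"
  assumes "u < v" "v < w" "d \<noteq> 0"
  shows "y + v *\<^sub>R d \<in> open_segment (y + u *\<^sub>R d) (y + w *\<^sub>R d)"
proof -
  have "linear (\<lambda>s::real. s *\<^sub>R d)" "inj (\<lambda>s::real. s *\<^sub>R d)"
    using \<open>d \<noteq> 0\<close> by (auto intro: linearI simp: inj_on_def algebra_simps)
  moreover have "v \<in> open_segment u w"
    using assms by (simp add: open_segment_eq_real_ivl)
  ultimately have "v *\<^sub>R d \<in> open_segment (u *\<^sub>R d) (w *\<^sub>R d)"
    using open_segment_linear_image[of "\<lambda>s. s *\<^sub>R d" u w] by blast
  then show ?thesis by simp
qed

lemma in_open_segment_extension: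
  fixes y z :: "'a::real_vector"
  assumes "y \<noteq> z" "t > 0"
  shows "z \<in> open_segment y (z + t *\<^sub>R (z - y))"
  using open_segment_on_line[of 0 1 "1 + t" "z - y" y] assms
  by (simp add: algebra_simps)

lemma open_segment_extension:
  fixes y z w :: "'a::real_vector"
  assumes "z \<in> open_segment y w"
  obtains t where "t > 0" "w = z + t *\<^sub>R (z - y)"
proof -
  from assms obtain u where u: "0 < u" "u < 1" "z = (1 - u) *\<^sub>R y + u *\<^sub>R w"
    by (auto simp: in_segment)
  then have "z - y = u *\<^sub>R (w - y)"
    by (simp add: algebra_simps)
  then have "z + ((1 - u) / u) *\<^sub>R (z - y) = z + (1 - u) *\<^sub>R (w - y)"
    using u by simp
  also have "\<dots> = w"
    using u(3) by (simp add: algebra_simps)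
  finally have "z + ((1 - u) / u) *\<^sub>R (z - y) = w" .
  with u show thesis
    using that[of "(1 - u) / u"] by simp
qed

lemma CN_iff_open_segment:
  "(D, f) \<in> CN \<longleftrightarrow>
     convex D \<and> (\<forall>y\<in>D. \<forall>w\<in>D. \<forall>z\<in>open_segment y w. f y \<le> f z \<longrightarrow> f z \<le> f w)"
  (is "_ \<longleftrightarrow> ?no_drop")
proof
  assume "(D, f) \<in> CN"
  then have "convex D" and conic: "\<And>y z t. \<lbrakk>y \<in> D; z \<in> D; t \<ge> 0; f y \<le> f z;
      z + t *\<^sub>R (z - y) \<in> D\<rbrakk> \<Longrightarrow> f (z + t *\<^sub>R (z - y)) \<ge> f z"
    unfolding CN_def by auto
  have "f z \<le> f w" if "y \<in> D" "w \<in> D" "z \<in> open_segment y w" "f y \<le> f z" for y w z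
  proof -
    obtain t where "t > 0" "w = z + t *\<^sub>R (z - y)"
      using open_segment_extension[OF \<open>z \<in> open_segment y w\<close>] by blast
    moreover have "z \<in> D"
      using that \<open>convex D\<close> convex_contains_open_segment by blast
    ultimately show ?thesis
      using conic that by auto
  qed
  with \<open>convex D\<close> show ?no_drop
    by blast
next
  assume ?no_drop
  then have "convex D" and no_drop: "\<And>y w z. \<lbrakk>y \<in> D; w \<in> D; z \<in> open_segment y w; f y \<le> f z\<rbrakk>
      \<Longrightarrow> f z \<le> f w"
    by auto
  have "f (z + t *\<^sub>R (z - y)) \<ge> f z"
    if "y \<in> D" "t \<ge> 0" "f y \<le> f z" "z + t *\<^sub>R (z - y) \<in> D" for y z t
  proof (cases "t = 0 \<or> y = z")
    case False
    then show ?thesis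
      using no_drop in_open_segment_extension[of y z t] that by auto
  qed auto
  with \<open>convex D\<close> show "(D, f) \<in> CN"
    unfolding CN_def by auto
qed

lemma SQC_subset_CN: "SQC \<subseteq> CN"
proof (clarify)
  fix D and f :: "real^'n \<Rightarrow> real"
  assume "(D, f) \<in> SQC"
  then have "convex D" and strict: "\<And>x y z. \<lbrakk>x \<in> D; y \<in> D; x \<noteq> y; z \<in> open_segment x y\<rbrakk>
      \<Longrightarrow> f z < max (f x) (f y)"
    unfolding SQC_def by auto
  have "f z \<le> f w" if "y \<in> D" "w \<in> D" "z \<in> open_segment y w" "f y \<le> f z" for y w z
    using strict[of y w z] that by (cases "y = w") auto
  with \<open>convex D\<close> show "(D, f) \<in> CN"
    by (simp add: CN_iff_open_segment)
qed

lemma CN_subset_QC: "CN \<subseteq> QC"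
proof (clarify)
  fix D and f :: "real^'n \<Rightarrow> real"
  assume "(D, f) \<in> CN"
  then have "convex D" and no_drop: "\<And>y w z. \<lbrakk>y \<in> D; w \<in> D; z \<in> open_segment y w; f y \<le> f z\<rbrakk>
      \<Longrightarrow> f z \<le> f w"
    by (auto simp: CN_iff_open_segment)
  have "f z \<le> max (f x) (f y)" if "x \<in> D" "y \<in> D" "z \<in> open_segment x y" for x y z
    using no_drop[OF that] by fastforce
  with \<open>convex D\<close> show "(D, f) \<in> QC"
    unfolding QC_def by auto
qed

lemma CONV_subset_CN: "CONV \<subseteq> CN"
proof (clarify)
  fix D and f :: "real^'n \<Rightarrow> real"
  assume "(D, f) \<in> CONV"
  then have "convex D" and "convex_on D f"
    unfolding CONV_def by auto
  have "f z \<le> f w" if "y \<in> D" "w \<in> D" "z \<in> open_segment y w" "f y \<le> f z" for y w z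
  proof -
    obtain u where u: "0 < u" "u < 1" "z = (1 - u) *\<^sub>R y + u *\<^sub>R w"
      using \<open>z \<in> open_segment y w\<close> by (auto simp: in_segment)
    have "f z \<le> (1 - u) * f y + u * f w"
      using convex_onD[OF \<open>convex_on D f\<close>, of u y w] u that by simp
    also have "\<dots> \<le> (1 - u) * f z + u * f w"
      using u \<open>f y \<le> f z\<close> by (simp add: mult_left_mono)
    finally have "u * f z \<le> u * f w"
      by (simp add: algebra_simps)
    with \<open>0 < u\<close> show ?thesis by simp
  qed
  with \<open>convex D\<close> show "(D, f) \<in> CN"
    by (simp add: CN_iff_open_segment)
qed

lemma poly_fun_on_line:
  assumes "p \<in> poly_fun"
  shows "\<exists>q. \<forall>s. p (y + s *\<^sub>R d) = poly q s"
  using assms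
proof (induction rule: poly_fun.induct)
  case (const c)
  show ?case by (rule exI[of _ "[:c:]"]) simp
next
  case (coord i)
  show ?case by (rule exI[of _ "[:y $ i, d $ i:]"]) (simp add: algebra_simps)
next
  case (add p q)
  then obtain q1 q2 where "\<forall>s. p (y + s *\<^sub>R d) = poly q1 s" "\<forall>s. q (y + s *\<^sub>R d) = poly q2 s"
    by blast
  then show ?case by (intro exI[of _ "q1 + q2"]) simp
next
  case (mult p q)
  then obtain q1 q2 where "\<forall>s. p (y + s *\<^sub>R d) = poly q1 s" "\<forall>s. q (y + s *\<^sub>R d) = poly q2 s"
    by blast
  then show ?case by (intro exI[of _ "q1 * q2"]) simp
qed

lemma poly_const_if_const_on_infinite:
  fixes q :: "'a::idom poly"
  assumes "infinite S" "\<And>s. s \<in> S \<Longrightarrow> poly q s = c"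
  shows "poly q x = c"
proof -
  have "q - [:c:] = 0"
  proof (rule ccontr)
    assume "q - [:c:] \<noteq> 0"
    then have "finite {s. poly (q - [:c:]) s = 0}"
      by (rule poly_roots_finite)
    moreover have "S \<subseteq> {s. poly (q - [:c:]) s = 0}"
      using assms(2) by auto
    ultimately show False
      using \<open>infinite S\<close> finite_subset by blast
  qed
  then have "poly (q - [:c:]) x = 0"
    by simp
  then show ?thesis
    by simp
qed

lemma QC_on_line:
  assumes "(UNIV, f) \<in> QC" "u < v" "v < w"
  shows "f (y + v *\<^sub>R d) \<le> max (f (y + u *\<^sub>R d)) (f (y + w *\<^sub>R d))"
proof (cases "d = 0")
  case False
  with assms show ?thesis
    using open_segment_on_line[of u v w d y] unfolding QC_def by blast
qed simp

lemma QCP_subset_CN: "QCP \<subseteq> CN"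
proof (clarify)
  fix D and p :: "real^'n \<Rightarrow> real"
  assume "(D, p) \<in> QCP"
  then have D: "D = UNIV" and "p \<in> poly_fun" and QC: "(UNIV, p) \<in> QC"
    unfolding QCP_def by auto
  have "p z \<le> p w" if "z \<in> open_segment y w" "p y \<le> p z" for y w z
  proof (rule ccontr)
    assume "\<not> p z \<le> p w"
    obtain a where a: "0 < a" "a < 1" "z = (1 - a) *\<^sub>R y + a *\<^sub>R w"
      using \<open>z \<in> open_segment y w\<close> by (auto simp: in_segment)
    define g where "g s = p (y + s *\<^sub>R (w - y))" for s
    obtain q where q: "g = poly q"
      using poly_fun_on_line[OF \<open>p \<in> poly_fun\<close>] unfolding g_def by blast
    have "z = y + a *\<^sub>R (w - y)"
      using a(3) by (simp add: algebra_simps)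
    then have g: "g 0 = p y" "g a = p z" "g 1 = p w"
      by (simp_all add: g_def)
    have g_quasiconvex: "g v \<le> max (g u) (g v')" if "u < v" "v < v'" for u v v'
      unfolding g_def using QC_on_line[OF QC that] .
    \<comment> \<open>g rises weakly from 0 to a and drops from a to 1, so it is constant between 0 and a\<close>
    have "g s = g a" if "s \<in> {0<..<a}" for s
    proof -
      have "g s \<le> max (g 0) (g a)" "g a \<le> max (g s) (g 1)"
        using that a(2) by (auto intro: g_quasiconvex)
      with g \<open>p y \<le> p z\<close> \<open>\<not> p z \<le> p w\<close> show ?thesis
        by (auto simp: max_def split: if_splits)
    qed
    then have "g 1 = g a"
      unfolding q by (rule poly_const_if_const_on_infinite[OF infinite_Ioo[OF \<open>0 < a\<close>]])
    with g \<open>\<not> p z \<le> p w\<close> show False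
      by simp
  qed
  with D show "(D, p) \<in> CN"
    by (simp add: CN_iff_open_segment)
qed

lemma constant_in_CN: "(UNIV, \<lambda>x. c) \<in> CN"
  unfolding CN_def by simp

lemma constant_notin_SQC: "((UNIV, \<lambda>x. c) :: 'n::finite rfun) \<notin> SQC"
proof
  assume "((UNIV, \<lambda>x. c) :: 'n rfun) \<in> SQC"
  then have "\<forall>x y :: real^'n. x \<noteq> y \<longrightarrow> open_segment x y = {}"
    unfolding SQC_def by auto
  moreover have "(0::real^'n) \<noteq> 1"
    by (simp add: vec_eq_iff)
  ultimately show False
    using midpoint_in_open_segment[of 0 "1::real^'n"] by blast
qed

lemma constant_notin_QCP: "(UNIV, \<lambda>x. c) \<notin> QCP"
  unfolding QCP_def by auto

lemma mono_coordinate_QC: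
  assumes "mono \<phi>"
  shows "((UNIV, \<lambda>x. \<phi> (x $ i)) :: 'n::finite rfun) \<in> QC"
proof -
  have "\<phi> (z $ i) \<le> max (\<phi> (x $ i)) (\<phi> (y $ i))" if "z \<in> open_segment x y" for x y z :: "real^'n"
  proof -
    obtain u where "0 < u" "u < 1" "z = (1 - u) *\<^sub>R x + u *\<^sub>R y"
      using \<open>z \<in> open_segment x y\<close> by (auto simp: in_segment)
    then have "z $ i \<le> max (x $ i) (y $ i)"
      by (auto intro: convex_bound_le)
    then show ?thesis
      using \<open>mono \<phi>\<close> by (simp add: max_of_mono monoD)
  qed
  then show ?thesis
    unfolding QC_def by auto
qed

lemma strict_mono_coordinate_CN:
  assumes "strict_mono \<phi>"
  shows "((UNIV, \<lambda>x. \<phi> (x $ i)) :: 'n::finite rfun) \<in> CN"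
proof -
  have "\<phi> (z $ i) \<le> \<phi> ((z + t *\<^sub>R (z - y)) $ i)" if "t \<ge> 0" "\<phi> (y $ i) \<le> \<phi> (z $ i)" for y z :: "real^'n" and t
  proof -
    have "y $ i \<le> z $ i"
      using that(2) assms by (simp add: strict_mono_less_eq)
    with \<open>t \<ge> 0\<close> show ?thesis
      using assms by (simp add: strict_mono_less_eq)
  qed
  then show ?thesis
    unfolding CN_def by auto
qed

lemma step_notin_CN: "((UNIV, \<lambda>x. if 0 < x $ i then 1 else 0) :: 'n::finite rfun) \<notin> CN"
proof
  let ?step = "\<lambda>x::real^'n. if 0 < x $ i then 1 else 0 :: real"
  assume "(UNIV, ?step) \<in> CN"
  then have "\<forall>y\<in>UNIV. \<forall>z\<in>UNIV. \<forall>t::real. t \<ge> 0 \<and> ?step y \<le> ?step z \<and> z + t *\<^sub>R (z - y) \<in> UNIV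
      \<longrightarrow> ?step (z + t *\<^sub>R (z - y)) \<ge> ?step z"
    unfolding CN_def mem_Collect_eq prod.case by (rule conjunct2)
  from this[rule_format, of "\<chi> j. 2" "\<chi> j. 1" 1] show False
    by simp
qed

lemma strict_mono_cube: "strict_mono (\<lambda>s::real. s ^ 3)"
proof (rule strict_monoI)
  fix a b :: real
  assume "a < b"
  then have "a ^ 3 \<le> b ^ 3"
    by (intro power_mono_odd) auto
  moreover have "a ^ 3 \<noteq> b ^ 3"
    using \<open>a < b\<close> odd_real_root_power_cancel[of 3] by (metis less_irrefl odd_numeral)
  ultimately show "a ^ 3 < b ^ 3" by simp
qed

lemma cube_notin_CONV: "((UNIV, \<lambda>x. (x $ i) ^ 3) :: 'n::finite rfun) \<notin> CONV"
proof
  assume "((UNIV, \<lambda>x. (x $ i) ^ 3) :: 'n rfun) \<in> CONV"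
  then have "convex_on UNIV (\<lambda>x::real^'n. (x $ i) ^ 3)"
    unfolding CONV_def by auto
  then have "((1 - 1/2) *\<^sub>R (\<chi> j. -1) + (1/2) *\<^sub>R 0 :: real^'n) $ i ^ 3
      \<le> (1 - 1/2) * (\<chi> j. -1 :: real^'n) $ i ^ 3 + (1/2) * (0 :: real^'n) $ i ^ 3"
    by (rule convex_onD) auto
  then show False by (simp add: power_divide)
qed

theorem mainTheorem2:
  shows "(SQC :: 'n::finite rfun set) \<subset> CN \<and> (CN :: 'n::finite rfun set) \<subset> QC
       \<and> (QCP :: 'n::finite rfun set) \<subset> CN
       \<and> (CONV :: 'n::finite rfun set) \<subset> CN"
proof (intro conjI psubsetI SQC_subset_CN CN_subset_QC QCP_subset_CN CONV_subset_CN)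
  fix i :: 'n
  show "(SQC :: 'n rfun set) \<noteq> CN"
    using constant_in_CN constant_notin_SQC by blast
  show "(CN :: 'n rfun set) \<noteq> QC"
    using mono_coordinate_QC[of "\<lambda>s::real. if 0 < s then 1 else 0 :: real" i] step_notin_CN[of i]
    by (auto simp: mono_def)
  show "(QCP :: 'n rfun set) \<noteq> CN"
    using constant_in_CN constant_notin_QCP by blast
  show "(CONV :: 'n rfun set) \<noteq> CN"
    using strict_mono_coordinate_CN[OF strict_mono_cube, of i] cube_notin_CONV[of i] by blast
qed

end
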